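(* For every $d\ge 1$ there exists $\beta_d>0$ such that the following holds. Let $\Delta,\Delta'\subset\mathbb{R}^d$ be vertex sets of regular simplices of edge length $1$ with $\mathrm{diam}(\Delta\cup\Delta')\le 1+\beta$ for some $0\le\beta<\beta_d$. Then \[ \mathrm{dist}_H(\Delta,\Delta')\le (d+1)d^2\,\beta . \]
   Context: A regular simplex of edge length $1$ in $\mathbb{R}^d$ is (identified with) its vertex set: $d+1$ points at pairwise Euclidean distance exactly $1$. $\mathrm{diam}(A)=\sup_{x,y\in A}\|x-y\|_2$. For nonempty compact $A,B\subset\mathbb{R}^d$, the Hausdorff distance is $\mathrm{dist}_H(A,B)=\max\{\sup_{a\in A}\inf_{b\in B}\|a-b\|_2,\ \sup_{b\in B}\inf_{a\in A}\|a-b\|_2\}$. *)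

theory Defs
  imports "HOL-Analysis.Analysis"
begin

definition unit_regular_simplex :: "'a::euclidean_space set \<Rightarrow> bool" where
  "unit_regular_simplex S \<longleftrightarrow> finite S \<and> card S = DIM('a) + 1 \<and>
     (\<forall>x\<in>S. \<forall>y\<in>S. x \<noteq> y \<longrightarrow> dist x y = 1)"

text \<open>Hausdorff distance (for nonempty compact sets).\<close>
definition hausdorff_dist :: "'a::metric_space set \<Rightarrow> 'a set \<Rightarrow> real" where
  "hausdorff_dist A B =
     max (SUP a\<in>A. INF b\<in>B. dist a b) (SUP b\<in>B. INF a\<in>A. dist a b)"

end

(*
  Fix a vertex v of \<Delta>, let c be the centroid of \<Delta>', N = d + 1 and \<epsilon> = 2\<beta> + \<beta>\<^sup>2. The weights
  \<theta> w = 1 + \<epsilon> - |v - w|\<^sup>2 of the vertices w of \<Delta>' are nonnegative by the diameter bound. The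
  centred vertices of a regular simplex form a tight frame, so \<Sum>\<theta> = 1 + \<alpha> and
  \<Sum>\<theta>\<^sup>2 = 1 + 2\<epsilon> + \<alpha>\<^sup>2 / N depend on v only through the excess \<alpha> = N (\<epsilon> - |v - c|\<^sup>2) + d / 2.
  As \<Sum>\<theta>\<^sup>2 \<le> (\<Sum>\<theta>)\<^sup>2, every excess is at least about \<epsilon> / 2, while by the parallel axis theorem
  the excesses of the vertices of \<Delta> add up to at most N\<^sup>2 \<epsilon>. Hence \<Sum>\<theta>\<^sup>2 is close to
  (\<Sum>\<theta>)\<^sup>2, which forces a single weight \<theta> w to carry almost all of the mass:
  |v - w|\<^sup>2 = 1 + \<epsilon> - \<theta> w is of order \<beta>\<^sup>2.
*)

theory Submission
  imports Defs
begin

definition centroid :: "'a::real_vector set \<Rightarrow> 'a" where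
  "centroid S = (1 / real (card S)) *\<^sub>R \<Sum>S"

lemma sum_diff_centroid:
  assumes "finite S" "S \<noteq> {}"
  shows "(\<Sum>b\<in>S. b - centroid S) = 0"
  using assms by (simp add: sum_subtractf centroid_def sum_constant_scaleR)

lemma sum_power2_dist_centroid:
  fixes x :: "'a::real_inner"
  assumes "finite S" "S \<noteq> {}"
  shows "(\<Sum>b\<in>S. (norm (x - b))\<^sup>2) =
    real (card S) * (norm (x - centroid S))\<^sup>2 + (\<Sum>b\<in>S. (norm (b - centroid S))\<^sup>2)"
proof -
  let ?c = "centroid S"
  have "(\<Sum>b\<in>S. (norm (x - b))\<^sup>2) =
      (\<Sum>b\<in>S. (norm (x - ?c))\<^sup>2 - 2 * ((x - ?c) \<bullet> (b - ?c)) + (norm (b - ?c))\<^sup>2)"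
  proof (rule sum.cong)
    fix b
    have "x - b = (x - ?c) - (b - ?c)" by simp
    then show "(norm (x - b))\<^sup>2 = (norm (x - ?c))\<^sup>2 - 2 * ((x - ?c) \<bullet> (b - ?c)) + (norm (b - ?c))\<^sup>2"
      by (simp add: power2_norm_eq_inner inner_diff_left inner_diff_right inner_commute algebra_simps)
  qed simp
  also have "\<dots> = real (card S) * (norm (x - ?c))\<^sup>2 - 2 * (\<Sum>b\<in>S. (x - ?c) \<bullet> (b - ?c))
      + (\<Sum>b\<in>S. (norm (b - ?c))\<^sup>2)"
    by (simp add: sum.distrib sum_subtractf sum_distrib_left)
  also have "(\<Sum>b\<in>S. (x - ?c) \<bullet> (b - ?c)) = 0"
    by (simp add: sum_diff_centroid[OF assms] flip: inner_sum_right)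
  finally show ?thesis by simp
qed

lemma equiangular_independent:
  fixes B :: "'a::real_inner set"
  assumes "finite B"
    and norm: "\<And>b. b \<in> B \<Longrightarrow> b \<bullet> b = a"
    and angle: "\<And>b b'. b \<in> B \<Longrightarrow> b' \<in> B \<Longrightarrow> b \<noteq> b' \<Longrightarrow> b \<bullet> b' = e"
    and "a \<noteq> e" and "a + (real (card B) - 1) * e \<noteq> 0"
  shows "independent B"
proof -
  have "\<forall>v\<in>B. u v = 0" if u: "(\<Sum>v\<in>B. u v *\<^sub>R v) = 0" for u
  proof -
    have coeff: "u b * (a - e) + e * sum u B = 0" if b: "b \<in> B" for b
    proof -
      have "0 = b \<bullet> (\<Sum>v\<in>B. u v *\<^sub>R v)" using u by simp
      also have "\<dots> = (\<Sum>v\<in>B. u v * (b \<bullet> v))" by (simp add: inner_sum_right)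
      also have "\<dots> = (\<Sum>v\<in>B. u v * e + (if v = b then u v * (a - e) else 0))"
        using norm angle b by (intro sum.cong) (auto simp: algebra_simps)
      also have "\<dots> = e * sum u B + u b * (a - e)"
        using b \<open>finite B\<close> by (simp add: sum.distrib sum_distrib_left mult.commute)
      finally show ?thesis by simp
    qed
    then have "(\<Sum>b\<in>B. u b * (a - e) + e * sum u B) = 0" by simp
    moreover have "(\<Sum>b\<in>B. u b * (a - e) + e * sum u B) =
        sum u B * (a - e) + real (card B) * (e * sum u B)"
      by (simp add: sum.distrib flip: sum_distrib_right)
    ultimately have "sum u B * (a + (real (card B) - 1) * e) = 0"
      by (simp add: algebra_simps)
    then have "sum u B = 0" using assms(5) by simp
    then show ?thesis using coeff \<open>a \<noteq> e\<close> by auto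
  qed
  then show ?thesis using real_vector.dependent_finite[OF \<open>finite B\<close>] by auto
qed

lemma sum_power2_le_power2_sum:
  fixes f :: "'b \<Rightarrow> real"
  assumes "\<And>i. i \<in> A \<Longrightarrow> 0 \<le> f i"
  shows "(\<Sum>i\<in>A. (f i)\<^sup>2) \<le> (sum f A)\<^sup>2"
proof -
  have "L2_set f A \<le> sum f A"
    using assms by (rule L2_set_le_sum)
  then show ?thesis
    unfolding L2_set_def by (rule sqrt_le_D)
qed

lemma exists_dominant_term:
  fixes f :: "'b \<Rightarrow> real"
  assumes "finite J" "J \<noteq> {}" and nonneg: "\<And>i. i \<in> J \<Longrightarrow> 0 \<le> f i"
  shows "\<exists>j\<in>J. sum f J \<le> real (card J) * f j \<and> f j \<le> sum f J \<and>
    (\<Sum>i\<in>J. (f i)\<^sup>2) \<le> (f j)\<^sup>2 + (sum f J - f j)\<^sup>2"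
proof -
  have "Max (f ` J) \<in> f ` J"
    using assms by simp
  then obtain j where "j \<in> J" and j_max: "f j = Max (f ` J)"
    by auto
  have "sum f J \<le> (\<Sum>i\<in>J. f j)"
    using assms j_max by (intro sum_mono) simp
  moreover have "f j \<le> sum f J"
    using \<open>j \<in> J\<close> assms by (intro member_le_sum) auto
  moreover have "(\<Sum>i\<in>J - {j}. (f i)\<^sup>2) \<le> (sum f (J - {j}))\<^sup>2"
    using nonneg by (intro sum_power2_le_power2_sum) auto
  then have "(\<Sum>i\<in>J. (f i)\<^sup>2) \<le> (f j)\<^sup>2 + (sum f J - f j)\<^sup>2"
    using \<open>j \<in> J\<close> \<open>finite J\<close> by (simp add: sum.remove)
  ultimately show ?thesis
    using \<open>j \<in> J\<close> by auto
qed

lemma unit_regular_simplexD: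
  assumes "unit_regular_simplex (S::'a::euclidean_space set)"
  shows "finite S" "card S = DIM('a) + 1" "S \<noteq> {}"
  using assms unfolding unit_regular_simplex_def by auto

lemma unit_regular_simplex_norm_diff:
  assumes "unit_regular_simplex (S::'a::euclidean_space set)" "a \<in> S" "b \<in> S" "a \<noteq> b"
  shows "norm (a - b) = 1"
  using assms unfolding unit_regular_simplex_def by (auto simp: dist_norm)

lemma unit_regular_simplex_sum_power2_dist:
  assumes S: "unit_regular_simplex (S::'a::euclidean_space set)" and "a \<in> S"
  shows "(\<Sum>b\<in>S. (norm (a - b))\<^sup>2) = real DIM('a)"
proof -
  have "(\<Sum>b\<in>S. (norm (a - b))\<^sup>2) = (\<Sum>b\<in>S - {a}. (norm (a - b))\<^sup>2)"
    using unit_regular_simplexD(1)[OF S] \<open>a \<in> S\<close> by (simp add: sum.remove)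
  also have "\<dots> = (\<Sum>b\<in>S - {a}. 1)"
    using unit_regular_simplex_norm_diff[OF S \<open>a \<in> S\<close>] by (intro sum.cong) auto
  finally show ?thesis
    using unit_regular_simplexD[OF S] \<open>a \<in> S\<close> by simp
qed

lemma unit_regular_simplex_circumradius:
  assumes S: "unit_regular_simplex (S::'a::euclidean_space set)" and "b \<in> S"
  shows "(norm (b - centroid S))\<^sup>2 = real DIM('a) / (2 * (real DIM('a) + 1))"
proof -
  note S' = unit_regular_simplexD[OF S]
  define K where "K = (\<Sum>b\<in>S. (norm (b - centroid S))\<^sup>2)"
  define n where "n = real DIM('a)"
  have radius: "(norm (a - centroid S))\<^sup>2 = (n - K) / (n + 1)" if "a \<in> S" for a
    using sum_power2_dist_centroid[OF S'(1,3), of a] unit_regular_simplex_sum_power2_dist[OF S that] S'(2)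
    unfolding K_def n_def by (simp add: field_simps)
  have "K = (\<Sum>a\<in>S. (norm (a - centroid S))\<^sup>2)"
    by (simp add: K_def)
  also have "\<dots> = (\<Sum>a\<in>S. (n - K) / (n + 1))"
    by (rule sum.cong[OF refl]) (rule radius)
  also have "\<dots> = n - K"
    using S'(2) unfolding n_def by (simp add: field_simps)
  finally have "K = n / 2" by simp
  with radius[OF \<open>b \<in> S\<close>] show ?thesis
    unfolding n_def by (simp add: field_simps)
qed

lemma unit_regular_simplex_inner_centroid:
  assumes S: "unit_regular_simplex (S::'a::euclidean_space set)" and "a \<in> S" "b \<in> S" "a \<noteq> b"
  shows "(a - centroid S) \<bullet> (b - centroid S) = - 1 / (2 * (real DIM('a) + 1))"
proof -
  let ?c = "centroid S"
  define n where "n = real DIM('a)"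
  have "0 \<le> n" by (simp add: n_def)
  have "1 = (norm ((a - ?c) - (b - ?c)))\<^sup>2"
    using unit_regular_simplex_norm_diff[OF assms] by simp
  also have "\<dots> = (norm (a - ?c))\<^sup>2 + (norm (b - ?c))\<^sup>2 - 2 * ((a - ?c) \<bullet> (b - ?c))"
    by (simp add: power2_norm_eq_inner inner_diff_left inner_diff_right inner_commute algebra_simps)
  finally have "(a - ?c) \<bullet> (b - ?c) = ((norm (a - ?c))\<^sup>2 + (norm (b - ?c))\<^sup>2 - 1) / 2"
    by simp
  also have "\<dots> = (n / (2 * (n + 1)) + n / (2 * (n + 1)) - 1) / 2"
    using unit_regular_simplex_circumradius[OF S] \<open>a \<in> S\<close> \<open>b \<in> S\<close> by (simp add: n_def)
  also have "\<dots> = - 1 / (2 * (n + 1))"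
    using \<open>0 \<le> n\<close> by (simp add: divide_simps)
  finally show ?thesis
    unfolding n_def .
qed

lemma unit_regular_simplex_span:
  assumes S: "unit_regular_simplex (S::'a::euclidean_space set)"
  shows "span ((\<lambda>w. w - centroid S) ` S) = UNIV"
proof -
  note S' = unit_regular_simplexD[OF S]
  obtain w0 where "w0 \<in> S" using S'(3) by auto
  define B where "B = (\<lambda>w. w - centroid S) ` (S - {w0})"
  define n where "n = real DIM('a)"
  have "inj_on (\<lambda>w. w - centroid S) (S - {w0})" by (auto simp: inj_on_def)
  then have card_B: "card B = DIM('a)"
    unfolding B_def using S' \<open>w0 \<in> S\<close> by (simp add: card_image)
  have "independent B"
  proof (rule equiangular_independent[where a = "n / (2 * (n + 1))" and e = "- 1 / (2 * (n + 1))"])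
    show "finite B" unfolding B_def using S' by simp
    show "b \<bullet> b = n / (2 * (n + 1))" if "b \<in> B" for b
      using that unit_regular_simplex_circumradius[OF S]
      unfolding B_def n_def by (auto simp: power2_norm_eq_inner)
    show "b \<bullet> b' = - 1 / (2 * (n + 1))" if "b \<in> B" "b' \<in> B" "b \<noteq> b'" for b b'
      using that unit_regular_simplex_inner_centroid[OF S]
      unfolding B_def n_def by auto
    have "0 \<le> n / (2 * (n + 1))" "- 1 / (2 * (n + 1)) < 0"
      unfolding n_def by simp_all
    then show "n / (2 * (n + 1)) \<noteq> - 1 / (2 * (n + 1))"
      by linarith
    show "n / (2 * (n + 1)) + (real (card B) - 1) * (- 1 / (2 * (n + 1))) \<noteq> 0"
      unfolding card_B n_def by (simp add: field_simps)
  qed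
  then have "UNIV \<subseteq> span B"
    by (intro eucl.card_ge_dim_independent) (auto simp: card_B)
  moreover have "span B \<subseteq> span ((\<lambda>w. w - centroid S) ` S)"
    unfolding B_def by (intro span_mono) auto
  ultimately show ?thesis by auto
qed

lemma unit_regular_simplex_frame_operator:
  assumes S: "unit_regular_simplex (S::'a::euclidean_space set)" and "v \<in> S"
  shows "(\<Sum>w\<in>S. ((v - centroid S) \<bullet> (w - centroid S)) *\<^sub>R (w - centroid S)) =
    (1 / 2) *\<^sub>R (v - centroid S)"
proof -
  note S' = unit_regular_simplexD[OF S]
  define N where "N = real DIM('a) + 1"
  define u where "u w = w - centroid S" for w
  have inner_u: "u v \<bullet> u w = - 1 / (2 * N) + (if w = v then 1 / 2 else 0)" if "w \<in> S" for w
  proof (cases "w = v")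
    case True
    have "0 < N" by (simp add: N_def)
    then show ?thesis
      using True unit_regular_simplex_circumradius[OF S \<open>v \<in> S\<close>]
      by (simp add: u_def power2_norm_eq_inner N_def field_simps)
  next
    case False
    then show ?thesis
      using unit_regular_simplex_inner_centroid[OF S \<open>v \<in> S\<close> \<open>w \<in> S\<close>]
      by (simp add: u_def N_def)
  qed
  have "(\<Sum>w\<in>S. (u v \<bullet> u w) *\<^sub>R u w) =
      (\<Sum>w\<in>S. (- 1 / (2 * N)) *\<^sub>R u w + (if w = v then (1 / 2) *\<^sub>R u w else 0))"
    by (intro sum.cong) (auto simp: inner_u scaleR_add_left scaleR_diff_left)
  also have "\<dots> = (\<Sum>w\<in>S. (- 1 / (2 * N)) *\<^sub>R u w) + (\<Sum>w\<in>S. if w = v then (1 / 2) *\<^sub>R u w else 0)"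
    by (rule sum.distrib)
  also have "\<dots> = (- 1 / (2 * N)) *\<^sub>R (\<Sum>w\<in>S. u w) + (1 / 2) *\<^sub>R u v"
    using S'(1) \<open>v \<in> S\<close> by (simp add: scaleR_sum_right)
  also have "\<dots> = (1 / 2) *\<^sub>R u v"
    using sum_diff_centroid[OF S'(1,3)] by (simp add: u_def)
  finally show ?thesis
    by (simp add: u_def)
qed

lemma unit_regular_simplex_tight_frame:
  assumes S: "unit_regular_simplex (S::'a::euclidean_space set)"
  shows "(\<Sum>w\<in>S. (p \<bullet> (w - centroid S))\<^sup>2) = (norm p)\<^sup>2 / 2"
proof -
  define u where "u w = w - centroid S" for w
  define f where "f p = (\<Sum>w\<in>S. (p \<bullet> u w) *\<^sub>R u w) - (1 / 2) *\<^sub>R p" for p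
  have "linear f"
    unfolding f_def by (intro linearI)
      (simp_all add: inner_add_left scaleR_add_left sum.distrib algebra_simps scaleR_sum_right)
  moreover have "f (u v) = 0" if "v \<in> S" for v
    using unit_regular_simplex_frame_operator[OF S that] by (simp add: f_def u_def)
  ultimately have "f p = 0"
    using real_vector.linear_eq_0_on_span[of f "u ` S" p] unit_regular_simplex_span[OF S]
    by (auto simp: u_def)
  then have "p \<bullet> f p = 0" by simp
  then show ?thesis
    by (simp add: f_def u_def inner_diff_right inner_sum_right power2_eq_square
        flip: power2_norm_eq_inner)
qed

lemma unit_regular_simplex_gap_decomposition:
  fixes S :: "'a::euclidean_space set"
  assumes S: "unit_regular_simplex S" and "w \<in> S"
  defines "N \<equiv> real DIM('a) + 1"
  shows "1 + \<epsilon> - (norm (x - w))\<^sup>2 =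
    (N * (1 + \<epsilon> - (norm (x - centroid S))\<^sup>2) - real DIM('a) / 2) / N
      + 2 * ((x - centroid S) \<bullet> (w - centroid S))"
proof -
  have "x - w = (x - centroid S) - (w - centroid S)" by simp
  then have "(norm (x - w))\<^sup>2 = (norm (x - centroid S))\<^sup>2
      - 2 * ((x - centroid S) \<bullet> (w - centroid S)) + (norm (w - centroid S))\<^sup>2"
    by (simp add: power2_norm_eq_inner inner_diff_left inner_diff_right inner_commute algebra_simps)
  moreover have "0 < N"
    by (simp add: N_def add_pos_nonneg)
  ultimately show ?thesis
    using unit_regular_simplex_circumradius[OF S \<open>w \<in> S\<close>] by (simp add: N_def field_simps)
qed

lemma unit_regular_simplex_sum_gap:
  fixes S :: "'a::euclidean_space set" and x :: 'a and \<epsilon> :: real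
  assumes S: "unit_regular_simplex S"
  defines "N \<equiv> real DIM('a) + 1"
    and "\<alpha> \<equiv> (real DIM('a) + 1) * (\<epsilon> - (norm (x - centroid S))\<^sup>2) + real DIM('a) / 2"
  shows "(\<Sum>w\<in>S. 1 + \<epsilon> - (norm (x - w))\<^sup>2) = 1 + \<alpha>"
    and "(\<Sum>w\<in>S. (1 + \<epsilon> - (norm (x - w))\<^sup>2)\<^sup>2) = 1 + 2 * \<epsilon> + \<alpha>\<^sup>2 / N"
proof -
  note S' = unit_regular_simplexD[OF S]
  define p where "p = x - centroid S"
  define A where "A = (1 + \<alpha>) / N"
  have "0 < N" and dim: "real DIM('a) = N - 1"
    by (simp_all add: N_def add_pos_nonneg)
  have gap: "1 + \<epsilon> - (norm (x - w))\<^sup>2 = A + 2 * (p \<bullet> (w - centroid S))" if "w \<in> S" for w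
    using unit_regular_simplex_gap_decomposition[OF S that, of \<epsilon> x] \<open>0 < N\<close>
    by (simp add: A_def \<alpha>_def p_def N_def field_simps)
  have linear_sum: "(\<Sum>w\<in>S. p \<bullet> (w - centroid S)) = 0"
    using sum_diff_centroid[OF S'(1,3)] by (simp flip: inner_sum_right)
  have card_S: "real (card S) = N"
    using S'(2) by (simp add: N_def)
  have "(\<Sum>w\<in>S. 1 + \<epsilon> - (norm (x - w))\<^sup>2) = (\<Sum>w\<in>S. A + 2 * (p \<bullet> (w - centroid S)))"
    by (rule sum.cong) (simp_all add: gap)
  also have "\<dots> = N * A"
    using linear_sum card_S by (simp add: sum.distrib flip: sum_distrib_left)
  finally show "(\<Sum>w\<in>S. 1 + \<epsilon> - (norm (x - w))\<^sup>2) = 1 + \<alpha>"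
    using \<open>0 < N\<close> by (simp add: A_def)
  have "(\<Sum>w\<in>S. (1 + \<epsilon> - (norm (x - w))\<^sup>2)\<^sup>2) =
      (\<Sum>w\<in>S. A\<^sup>2 + 4 * A * (p \<bullet> (w - centroid S)) + 4 * (p \<bullet> (w - centroid S))\<^sup>2)"
    by (rule sum.cong) (simp_all add: gap power2_sum power_mult_distrib)
  also have "\<dots> = N * A\<^sup>2 + 2 * (norm p)\<^sup>2"
    using card_S linear_sum unit_regular_simplex_tight_frame[OF S, of p]
    by (simp add: sum.distrib flip: sum_distrib_left)
  also have "\<dots> = 1 + 2 * \<epsilon> + \<alpha>\<^sup>2 / N"
    using \<open>0 < N\<close> unfolding A_def \<alpha>_def dim p_def by (simp add: field_simps power2_eq_square)
  finally show "(\<Sum>w\<in>S. (1 + \<epsilon> - (norm (x - w))\<^sup>2)\<^sup>2) = 1 + 2 * \<epsilon> + \<alpha>\<^sup>2 / N" .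
qed

lemma unit_regular_simplex_sum_power2_dist_ge:
  assumes S: "unit_regular_simplex (S::'a::euclidean_space set)"
  shows "real DIM('a) / 2 \<le> (\<Sum>x\<in>S. (norm (x - p))\<^sup>2)"
proof -
  note S' = unit_regular_simplexD[OF S]
  have "(\<Sum>x\<in>S. (norm (x - centroid S))\<^sup>2) = (\<Sum>x\<in>S. real DIM('a) / (2 * (real DIM('a) + 1)))"
    using unit_regular_simplex_circumradius[OF S] by simp
  also have "\<dots> = real DIM('a) / 2"
    using S'(2) by (simp add: divide_simps)
  finally have "(\<Sum>x\<in>S. (norm (x - centroid S))\<^sup>2) = real DIM('a) / 2" .
  moreover have "(\<Sum>x\<in>S. (norm (x - p))\<^sup>2) =
      real (card S) * (norm (p - centroid S))\<^sup>2 + (\<Sum>x\<in>S. (norm (x - centroid S))\<^sup>2)"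
    using sum_power2_dist_centroid[OF S'(1,3), of p] by (simp add: norm_minus_commute)
  ultimately show ?thesis by simp
qed

lemma unit_regular_simplex_sum_excess_le:
  assumes S: "unit_regular_simplex (S::'a::euclidean_space set)"
  shows "(\<Sum>x\<in>S. (real DIM('a) + 1) * (\<epsilon> - (norm (x - p))\<^sup>2) + real DIM('a) / 2)
    \<le> (real DIM('a) + 1)\<^sup>2 * \<epsilon>"
proof -
  define N where "N = real DIM('a) + 1"
  have "(\<Sum>x\<in>S. N * (\<epsilon> - (norm (x - p))\<^sup>2) + real DIM('a) / 2) =
      (\<Sum>x\<in>S. (N * \<epsilon> + real DIM('a) / 2) - N * (norm (x - p))\<^sup>2)"
    by (simp add: algebra_simps)
  also have "\<dots> = N * (N * \<epsilon> + real DIM('a) / 2) - N * (\<Sum>x\<in>S. (norm (x - p))\<^sup>2)"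
    using unit_regular_simplexD(2)[OF S] by (simp add: sum_subtractf sum_distrib_left N_def)
  also have "\<dots> \<le> N * (N * \<epsilon> + real DIM('a) / 2) - N * (real DIM('a) / 2)"
    using unit_regular_simplex_sum_power2_dist_ge[OF S] by (simp add: N_def)
  also have "\<dots> = N\<^sup>2 * \<epsilon>"
    by (simp add: power2_eq_square algebra_simps)
  finally show ?thesis
    by (simp add: N_def)
qed

lemma excess_nonneg:
  fixes N \<epsilon> \<alpha> :: real
  assumes "1 \<le> N" "0 \<le> \<epsilon>" "0 \<le> 1 + \<alpha>"
    and "1 + 2 * \<epsilon> + \<alpha>\<^sup>2 / N \<le> (1 + \<alpha>)\<^sup>2"
  shows "0 \<le> \<alpha>"
proof (rule ccontr)
  assume "\<not> 0 \<le> \<alpha>"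
  then have "\<alpha> * (1 + \<alpha>) \<le> 0"
    using assms(3) by (simp add: mult_nonpos_nonneg)
  then have "(1 + \<alpha>)\<^sup>2 \<le> 1 + \<alpha>"
    by (simp add: power2_eq_square algebra_simps)
  moreover have "0 \<le> \<alpha>\<^sup>2 / N"
    using assms(1) by simp
  ultimately show False
    using assms(2,4) \<open>\<not> 0 \<le> \<alpha>\<close> by linarith
qed

lemma excess_ge_half:
  fixes N \<epsilon> \<alpha> :: real
  assumes "0 \<le> N" "0 \<le> \<alpha>" "\<alpha> \<le> 2"
    and "1 + 2 * \<epsilon> + \<alpha>\<^sup>2 / N \<le> (1 + \<alpha>)\<^sup>2"
  shows "\<epsilon> / 2 \<le> \<alpha>"
proof -
  have "\<alpha>\<^sup>2 \<le> 2 * \<alpha>"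
    using assms(2,3) by (simp add: power2_eq_square mult_right_mono)
  moreover have "0 \<le> \<alpha>\<^sup>2 / N"
    using assms(1) by simp
  ultimately show ?thesis
    using assms(4) by (simp add: power2_sum)
qed

lemma dominant_term_deficit_small:
  fixes N \<epsilon> \<alpha> t :: real
  assumes N: "1 \<le> N" and "0 \<le> \<epsilon>" "0 \<le> \<alpha>" "\<alpha> \<le> N\<^sup>2 * \<epsilon>" and small: "1000 * N ^ 3 * \<epsilon> \<le> 1"
    and average: "1 + \<alpha> \<le> N * t" and "t \<le> 1 + \<alpha>"
    and squares: "1 + 2 * \<epsilon> + \<alpha>\<^sup>2 / N \<le> t\<^sup>2 + (1 + \<alpha> - t)\<^sup>2"
  shows "\<epsilon> \<le> 1 / 1000" "\<alpha> \<le> 1 / 1000" "1 + \<epsilon> - t \<le> 3 / 1000"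
proof -
  define s where "s = 1 + \<alpha> - t"
  have "0 \<le> s"
    using assms by (simp add: s_def)
  have "N\<^sup>2 * \<epsilon> \<le> N ^ 3 * \<epsilon>"
    using N \<open>0 \<le> \<epsilon>\<close> by (intro mult_right_mono power_increasing) simp_all
  moreover have "\<epsilon> \<le> N\<^sup>2 * \<epsilon>"
    using mult_right_mono[OF one_le_power[OF N, of 2] \<open>0 \<le> \<epsilon>\<close>] by simp
  ultimately show "\<epsilon> \<le> 1 / 1000" "\<alpha> \<le> 1 / 1000"
    using \<open>\<alpha> \<le> N\<^sup>2 * \<epsilon>\<close> small by linarith+
  (* t is at least the average 1 / N and t s is of order \<alpha>, so s and the deficit are small *)
  have "2 * (t * s) \<le> 2 * \<alpha> - 2 * \<epsilon> + \<alpha>\<^sup>2 - \<alpha>\<^sup>2 / N"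
    using squares by (simp add: s_def power2_eq_square algebra_simps)
  moreover have "\<alpha>\<^sup>2 \<le> \<alpha>"
    using \<open>0 \<le> \<alpha>\<close> \<open>\<alpha> \<le> 1 / 1000\<close> by (simp add: power2_eq_square mult_left_le)
  moreover have "0 \<le> \<alpha>\<^sup>2 / N"
    using N by simp
  ultimately have "t * s \<le> 2 * \<alpha>"
    using \<open>0 \<le> \<epsilon>\<close> \<open>0 \<le> \<alpha>\<close> by linarith
  have "1 \<le> N * t"
    using average \<open>0 \<le> \<alpha>\<close> by linarith
  then have "s \<le> N * (t * s)"
    using mult_right_mono[of 1 "N * t" s] \<open>0 \<le> s\<close> by (simp add: mult.assoc)
  also have "\<dots> \<le> N * (2 * \<alpha>)"
    using \<open>t * s \<le> 2 * \<alpha>\<close> N by (simp add: mult_left_mono)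
  also have "\<dots> \<le> 2 * (N ^ 3 * \<epsilon>)"
    using \<open>\<alpha> \<le> N\<^sup>2 * \<epsilon>\<close> N by (simp add: power3_eq_cube power2_eq_square mult_left_mono mult.assoc)
  finally show "1 + \<epsilon> - t \<le> 3 / 1000"
    using small \<open>\<epsilon> \<le> 1 / 1000\<close> \<open>0 \<le> \<alpha>\<close> by (simp add: s_def)
qed

lemma dominant_term_deficit_le:
  fixes N \<epsilon> \<alpha> t :: real
  assumes N: "1 \<le> N" and "0 \<le> \<epsilon>" "0 \<le> \<alpha>" "\<alpha> \<le> N\<^sup>2 * \<epsilon>" and small: "1000 * N ^ 3 * \<epsilon> \<le> 1"
    and average: "1 + \<alpha> \<le> N * t" and "t \<le> 1 + \<epsilon>" "t \<le> 1 + \<alpha>"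
    and squares: "1 + 2 * \<epsilon> + \<alpha>\<^sup>2 / N \<le> t\<^sup>2 + (1 + \<alpha> - t)\<^sup>2"
  shows "99 * (1 + \<epsilon> - t) \<le> 100 * ((\<epsilon> - \<alpha> / 2)\<^sup>2 + (N - 2) * \<alpha>\<^sup>2 / (4 * N))"
proof -
  note a_priori = dominant_term_deficit_small[OF assms(1-6,8-9)]
  define y where "y = 1 + \<epsilon> - t"
  define b where "b = \<epsilon> - \<alpha> / 2"
  define K where "K = (N - 2) * \<alpha>\<^sup>2 / (4 * N)"
  have "0 \<le> y" "y \<le> 3 / 1000"
    using assms a_priori by (simp_all add: y_def)
  have "\<bar>b\<bar> \<le> 1 / 1000"
    unfolding b_def abs_le_iff using \<open>0 \<le> \<epsilon>\<close> \<open>0 \<le> \<alpha>\<close> a_priori by (intro conjI) linarith+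
  (* squares says y \<le> (b - y)\<^sup>2 + K; as b and y are tiny, this is y \<le> b\<^sup>2 + K up to 100 / 99 *)
  have "t\<^sup>2 + (1 + \<alpha> - t)\<^sup>2 - (1 + 2 * \<epsilon> + \<alpha>\<^sup>2 / N) = 2 * ((b - y)\<^sup>2 + K - y)"
    using N by (simp add: K_def y_def b_def field_simps power2_eq_square)
  with squares have "y \<le> (b - y)\<^sup>2 + K"
    by (simp add: algebra_simps)
  moreover have "(b - y)\<^sup>2 \<le> b\<^sup>2 + (2 * \<bar>b\<bar> + y) * y"
  proof -
    have "- b * y \<le> \<bar>b\<bar> * y"
      using mult_right_mono[OF abs_ge_minus_self \<open>0 \<le> y\<close>] by simp
    moreover have "(b - y)\<^sup>2 = b\<^sup>2 - 2 * (b * y) + y * y" "(2 * \<bar>b\<bar> + y) * y = 2 * (\<bar>b\<bar> * y) + y * y"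
      by (simp_all add: power2_eq_square algebra_simps)
    ultimately show ?thesis
      by linarith
  qed
  moreover have "(2 * \<bar>b\<bar> + y) * y \<le> y / 100"
    using \<open>0 \<le> y\<close> \<open>y \<le> 3 / 1000\<close> \<open>\<bar>b\<bar> \<le> 1 / 1000\<close> mult_right_mono[of "2 * \<bar>b\<bar> + y" "1 / 100" y]
    by simp
  ultimately have "99 * y \<le> 100 * b\<^sup>2 + 100 * K"
    by linarith
  then show ?thesis
    by (simp add: y_def b_def K_def distrib_left)
qed

lemma deficit_estimate_line:
  fixes \<beta> \<epsilon> \<alpha> :: real
  assumes "\<epsilon>\<^sup>2 \<le> 40401 / 10000 * \<beta>\<^sup>2" "0 \<le> \<epsilon>" "\<epsilon> / 2 \<le> \<alpha>" "\<alpha> \<le> 7 / 2 * \<epsilon>"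
  shows "100 * (\<epsilon> - \<alpha> / 2)\<^sup>2 \<le> 99 * (2 * \<beta>)\<^sup>2"
proof -
  have "\<bar>\<epsilon> - \<alpha> / 2\<bar> \<le> 3 / 4 * \<epsilon>"
    using assms(3,4) unfolding abs_le_iff by (intro conjI) linarith+
  then have "(\<epsilon> - \<alpha> / 2)\<^sup>2 \<le> (3 / 4 * \<epsilon>)\<^sup>2"
    using \<open>0 \<le> \<epsilon>\<close> by (simp add: power2_le_iff_abs_le)
  then have "(\<epsilon> - \<alpha> / 2)\<^sup>2 \<le> 9 / 16 * \<epsilon>\<^sup>2"
    by (simp add: power_mult_distrib power_divide)
  then have "100 * (\<epsilon> - \<alpha> / 2)\<^sup>2 \<le> 99 * (4 * \<beta>\<^sup>2)"
    using assms(1) zero_le_power2[of \<beta>] by linarith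
  then show ?thesis
    by (simp add: power_mult_distrib)
qed

lemma deficit_estimate_higher:
  fixes D \<beta> \<epsilon> \<alpha> :: real
  assumes "2 \<le> D" "\<epsilon>\<^sup>2 \<le> 40401 / 10000 * \<beta>\<^sup>2" "0 \<le> \<epsilon>" "0 \<le> \<alpha>" "\<alpha> \<le> (D + 1)\<^sup>2 * \<epsilon>"
  shows "100 * ((\<epsilon> - \<alpha> / 2)\<^sup>2 + (D - 1) * \<alpha>\<^sup>2 / (4 * (D + 1))) \<le> 99 * ((D + 1) * D\<^sup>2 * \<beta>)\<^sup>2"
proof -
  define N where "N = D + 1"
  have "3 \<le> N" "2 \<le> N\<^sup>2" "\<alpha> \<le> N\<^sup>2 * \<epsilon>"
    using assms power_mono[of 3 N 2] by (simp_all add: N_def)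
  then have "\<bar>\<epsilon> - \<alpha> / 2\<bar> \<le> N\<^sup>2 * \<epsilon> / 2"
    using \<open>0 \<le> \<alpha>\<close> \<open>0 \<le> \<epsilon>\<close> mult_right_mono[OF \<open>2 \<le> N\<^sup>2\<close> \<open>0 \<le> \<epsilon>\<close>]
    unfolding abs_le_iff by (intro conjI) linarith+
  then have "(\<epsilon> - \<alpha> / 2)\<^sup>2 \<le> (N\<^sup>2 * \<epsilon> / 2)\<^sup>2"
    using \<open>0 \<le> \<epsilon>\<close> by (simp add: power2_le_iff_abs_le)
  also have "\<dots> = N ^ 4 * \<epsilon>\<^sup>2 / 4"
    by (simp add: power_mult_distrib power_divide flip: power_mult)
  finally have center: "(\<epsilon> - \<alpha> / 2)\<^sup>2 \<le> N ^ 4 * \<epsilon>\<^sup>2 / 4" .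
  have "\<alpha>\<^sup>2 \<le> (N\<^sup>2 * \<epsilon>)\<^sup>2"
    using \<open>\<alpha> \<le> N\<^sup>2 * \<epsilon>\<close> \<open>0 \<le> \<alpha>\<close> by (rule power_mono)
  then have "(D - 1) * \<alpha>\<^sup>2 / (4 * N) \<le> (D - 1) * (N ^ 4 * \<epsilon>\<^sup>2) / (4 * N)"
    using \<open>2 \<le> D\<close> \<open>3 \<le> N\<close>
    by (intro divide_right_mono mult_left_mono) (simp_all add: power_mult_distrib flip: power_mult)
  also have "\<dots> = (D - 1) * N ^ 3 * \<epsilon>\<^sup>2 / 4"
    using \<open>3 \<le> N\<close> by (simp add: power_numeral_reduce field_simps)
  finally have "(\<epsilon> - \<alpha> / 2)\<^sup>2 + (D - 1) * \<alpha>\<^sup>2 / (4 * N) \<le> N ^ 4 * \<epsilon>\<^sup>2 / 4 + (D - 1) * N ^ 3 * \<epsilon>\<^sup>2 / 4"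
    using center by linarith
  also have "\<dots> = D * N ^ 3 * \<epsilon>\<^sup>2 / 2"
    by (simp add: N_def power_numeral_reduce field_simps)
  finally have "100 * ((\<epsilon> - \<alpha> / 2)\<^sup>2 + (D - 1) * \<alpha>\<^sup>2 / (4 * N)) \<le> 50 * (D * N ^ 3) * \<epsilon>\<^sup>2"
    by simp
  also have "\<dots> \<le> 50 * (D * N ^ 3) * (40401 / 10000 * \<beta>\<^sup>2)"
    using assms(2) \<open>2 \<le> D\<close> \<open>3 \<le> N\<close> by (intro mult_left_mono) simp_all
  also have "\<dots> = (50 * 40401 / 10000 * N) * (D * N\<^sup>2 * \<beta>\<^sup>2)"
    by (simp add: power_numeral_reduce)
  also have "\<dots> \<le> (99 * D ^ 3) * (D * N\<^sup>2 * \<beta>\<^sup>2)"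
  proof (rule mult_right_mono)
    have "4 * D \<le> D ^ 3"
      using \<open>2 \<le> D\<close> mult_right_mono[of 4 "D\<^sup>2" D] power_mono[of 2 D 2]
      by (simp add: power_numeral_reduce)
    then show "50 * 40401 / 10000 * N \<le> 99 * D ^ 3"
      using \<open>2 \<le> D\<close> by (simp add: N_def)
  qed (use \<open>2 \<le> D\<close> in simp)
  also have "\<dots> = 99 * (N * D\<^sup>2 * \<beta>)\<^sup>2"
    by (simp add: power_mult_distrib power_numeral_reduce)
  finally show ?thesis
    by (simp add: N_def)
qed

lemma deficit_estimate_le:
  fixes d :: nat and \<beta> \<epsilon> \<alpha> :: real
  assumes "1 \<le> d" "0 \<le> \<beta>" "\<beta> \<le> 1 / 100" and \<epsilon>: "\<epsilon> = 2 * \<beta> + \<beta>\<^sup>2"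
    and lower: "\<epsilon> / 2 \<le> \<alpha>" and upper: "\<alpha> \<le> (real d + 1)\<^sup>2 * \<epsilon> - real d * \<epsilon> / 2"
  shows "100 * ((\<epsilon> - \<alpha> / 2)\<^sup>2 + (real d - 1) * \<alpha>\<^sup>2 / (4 * (real d + 1)))
    \<le> 99 * ((real d + 1) * (real d)\<^sup>2 * \<beta>)\<^sup>2"
proof -
  have "0 \<le> \<epsilon>" "0 \<le> real d * \<epsilon>"
    using assms by simp_all
  have "\<beta>\<^sup>2 \<le> \<beta> / 100"
    using assms(2,3) mult_left_mono[of \<beta> "1 / 100" \<beta>] by (simp add: power2_eq_square)
  then have "\<epsilon> \<le> 201 / 100 * \<beta>"
    using \<epsilon> by simp
  then have "\<epsilon>\<^sup>2 \<le> (201 / 100 * \<beta>)\<^sup>2"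
    using \<open>0 \<le> \<epsilon>\<close> by (rule power_mono)
  then have eps_sq: "\<epsilon>\<^sup>2 \<le> 40401 / 10000 * \<beta>\<^sup>2"
    by (simp add: power2_eq_square algebra_simps)
  consider (line) "d = 1" | (higher) "2 \<le> d"
    using assms(1) by linarith
  then show ?thesis
  proof cases
    case line
    (* without the lower bound on \<alpha> the constant 4 = (d + 1) d\<^sup>2 would narrowly fail here *)
    then show ?thesis
      using deficit_estimate_line[OF eps_sq \<open>0 \<le> \<epsilon>\<close> lower] upper by simp
  next
    case higher
    then show ?thesis
      using deficit_estimate_higher[OF _ eps_sq \<open>0 \<le> \<epsilon>\<close>, of "real d" \<alpha>] lower upper
        \<open>0 \<le> \<epsilon>\<close> \<open>0 \<le> real d * \<epsilon>\<close> by simp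
  qed
qed

lemma unit_regular_simplex_excess_bounds:
  fixes S S' :: "'a::euclidean_space set" and \<epsilon> :: real
  assumes S: "unit_regular_simplex S" and S': "unit_regular_simplex S'"
    and "0 \<le> \<epsilon>" and small: "(real DIM('a) + 1)\<^sup>2 * \<epsilon> \<le> 2"
    and close: "\<And>x w. x \<in> S \<Longrightarrow> w \<in> S' \<Longrightarrow> (norm (x - w))\<^sup>2 \<le> 1 + \<epsilon>"
    and "v \<in> S"
  defines "N \<equiv> real DIM('a) + 1"
    and "\<alpha> \<equiv> \<lambda>x. (real DIM('a) + 1) * (\<epsilon> - (norm (x - centroid S'))\<^sup>2) + real DIM('a) / 2"
  shows "\<epsilon> / 2 \<le> \<alpha> v" and "\<alpha> v \<le> N\<^sup>2 * \<epsilon> - real DIM('a) * \<epsilon> / 2"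
proof -
  note S_props = unit_regular_simplexD[OF S]
  have "1 \<le> N"
    by (simp add: N_def)
  have squares: "1 + 2 * \<epsilon> + (\<alpha> x)\<^sup>2 / N \<le> (1 + \<alpha> x)\<^sup>2" and total_nonneg: "0 \<le> 1 + \<alpha> x"
    if "x \<in> S" for x
  proof -
    have nonneg: "0 \<le> 1 + \<epsilon> - (norm (x - w))\<^sup>2" if "w \<in> S'" for w
      using close[OF \<open>x \<in> S\<close> that] by simp
    then show "1 + 2 * \<epsilon> + (\<alpha> x)\<^sup>2 / N \<le> (1 + \<alpha> x)\<^sup>2"
      using sum_power2_le_power2_sum[of S' "\<lambda>w. 1 + \<epsilon> - (norm (x - w))\<^sup>2"]
      unfolding unit_regular_simplex_sum_gap[OF S'] by (simp add: N_def \<alpha>_def)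
    show "0 \<le> 1 + \<alpha> x"
      using sum_nonneg[of S' "\<lambda>w. 1 + \<epsilon> - (norm (x - w))\<^sup>2", OF nonneg]
      unfolding unit_regular_simplex_sum_gap[OF S'] by (simp add: N_def \<alpha>_def)
  qed
  have \<alpha>_nonneg: "0 \<le> \<alpha> x" if "x \<in> S" for x
    using excess_nonneg[OF \<open>1 \<le> N\<close> \<open>0 \<le> \<epsilon>\<close>] squares[OF that] total_nonneg[OF that] by blast
  have "sum \<alpha> S \<le> N\<^sup>2 * \<epsilon>"
    using unit_regular_simplex_sum_excess_le[OF S] by (simp add: \<alpha>_def N_def)
  have \<alpha>_le: "\<alpha> x \<le> N\<^sup>2 * \<epsilon>" if "x \<in> S" for x
    using member_le_sum[of x S \<alpha>] S_props(1) that \<alpha>_nonneg \<open>sum \<alpha> S \<le> N\<^sup>2 * \<epsilon>\<close> by force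
  have \<alpha>_ge: "\<epsilon> / 2 \<le> \<alpha> x" if "x \<in> S" for x
    using excess_ge_half[OF _ \<alpha>_nonneg[OF that] _ squares[OF that]] \<alpha>_le[OF that] small \<open>1 \<le> N\<close>
    by (simp add: N_def)
  then show "\<epsilon> / 2 \<le> \<alpha> v"
    using \<open>v \<in> S\<close> .
  have "real DIM('a) * \<epsilon> / 2 \<le> sum \<alpha> (S - {v})"
    using sum_mono[of "S - {v}" "\<lambda>_. \<epsilon> / 2" \<alpha>] \<alpha>_ge S_props \<open>v \<in> S\<close> by simp
  moreover have "sum \<alpha> S = \<alpha> v + sum \<alpha> (S - {v})"
    using S_props(1) \<open>v \<in> S\<close> by (simp add: sum.remove)
  ultimately show "\<alpha> v \<le> N\<^sup>2 * \<epsilon> - real DIM('a) * \<epsilon> / 2"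
    using \<open>sum \<alpha> S \<le> N\<^sup>2 * \<epsilon>\<close> by linarith
qed

lemma unit_regular_simplex_dominant_vertex:
  fixes S :: "'a::euclidean_space set" and v :: 'a and \<epsilon> \<alpha> :: real
  defines "N \<equiv> real DIM('a) + 1"
  assumes S: "unit_regular_simplex S" and "0 \<le> \<epsilon>" and small: "1000 * N ^ 3 * \<epsilon> \<le> 1"
    and close: "\<And>w. w \<in> S \<Longrightarrow> (norm (v - w))\<^sup>2 \<le> 1 + \<epsilon>"
    and \<alpha>: "\<alpha> = N * (\<epsilon> - (norm (v - centroid S))\<^sup>2) + real DIM('a) / 2"
    and "0 \<le> \<alpha>" "\<alpha> \<le> N\<^sup>2 * \<epsilon>"
  shows "\<exists>w\<in>S. 99 * (norm (v - w))\<^sup>2 \<le> 100 * ((\<epsilon> - \<alpha> / 2)\<^sup>2 + (N - 2) * \<alpha>\<^sup>2 / (4 * N))"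
proof -
  define \<theta> where "\<theta> w = 1 + \<epsilon> - (norm (v - w))\<^sup>2" for w
  have sums: "sum \<theta> S = 1 + \<alpha>" "(\<Sum>w\<in>S. (\<theta> w)\<^sup>2) = 1 + 2 * \<epsilon> + \<alpha>\<^sup>2 / N"
    using unit_regular_simplex_sum_gap[OF S, of \<epsilon> v] by (simp_all add: \<theta>_def \<alpha> N_def)
  have "0 \<le> \<theta> w" if "w \<in> S" for w
    using close[OF that] by (simp add: \<theta>_def)
  moreover have "real (card S) = N"
    using unit_regular_simplexD(2)[OF S] by (simp add: N_def)
  ultimately obtain w where "w \<in> S" and average: "sum \<theta> S \<le> N * \<theta> w"
    and below_total: "\<theta> w \<le> sum \<theta> S"
    and dominant: "(\<Sum>i\<in>S. (\<theta> i)\<^sup>2) \<le> (\<theta> w)\<^sup>2 + (sum \<theta> S - \<theta> w)\<^sup>2"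
    using exists_dominant_term[OF unit_regular_simplexD(1,3)[OF S], of \<theta>] by auto
  have "99 * (1 + \<epsilon> - \<theta> w) \<le> 100 * ((\<epsilon> - \<alpha> / 2)\<^sup>2 + (N - 2) * \<alpha>\<^sup>2 / (4 * N))"
  proof (rule dominant_term_deficit_le)
    show "1 + \<alpha> \<le> N * \<theta> w" "\<theta> w \<le> 1 + \<alpha>"
      using average below_total by (simp_all only: sums)
    show "1 + 2 * \<epsilon> + \<alpha>\<^sup>2 / N \<le> (\<theta> w)\<^sup>2 + (1 + \<alpha> - \<theta> w)\<^sup>2"
      using dominant by (simp only: sums)
    show "\<theta> w \<le> 1 + \<epsilon>"
      by (simp add: \<theta>_def)
  qed (use \<open>0 \<le> \<epsilon>\<close> \<open>0 \<le> \<alpha>\<close> \<open>\<alpha> \<le> N\<^sup>2 * \<epsilon>\<close> small in \<open>simp_all add: N_def\<close>)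
  then show ?thesis
    using \<open>w \<in> S\<close> by (auto simp: \<theta>_def)
qed

lemma small_beta_bounds:
  fixes N \<beta> :: real
  assumes "1 \<le> N" "0 \<le> \<beta>" and small: "3000 * N ^ 3 * \<beta> \<le> 1"
  shows "\<beta> \<le> 1 / 100" "1000 * N ^ 3 * (2 * \<beta> + \<beta>\<^sup>2) \<le> 1" "N\<^sup>2 * (2 * \<beta> + \<beta>\<^sup>2) \<le> 2"
proof -
  have "1 \<le> N ^ 3"
    using assms(1) by (simp add: one_le_power)
  then have "3000 * \<beta> \<le> 3000 * N ^ 3 * \<beta>"
    using mult_right_mono[of 1 "N ^ 3" \<beta>] \<open>0 \<le> \<beta>\<close> by simp
  then show "\<beta> \<le> 1 / 100"
    using small by simp
  then have "2 * \<beta> + \<beta>\<^sup>2 \<le> 3 * \<beta>"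
    using \<open>0 \<le> \<beta>\<close> mult_left_mono[of \<beta> 1 \<beta>] by (simp add: power2_eq_square)
  then have "1000 * N ^ 3 * (2 * \<beta> + \<beta>\<^sup>2) \<le> 1000 * N ^ 3 * (3 * \<beta>)"
    using assms(1) by (intro mult_left_mono) simp_all
  also have "\<dots> \<le> 1"
    using small by simp
  finally show "1000 * N ^ 3 * (2 * \<beta> + \<beta>\<^sup>2) \<le> 1" .
  moreover have "N\<^sup>2 * (2 * \<beta> + \<beta>\<^sup>2) \<le> N ^ 3 * (2 * \<beta> + \<beta>\<^sup>2)"
    using assms(1,2) by (intro mult_right_mono power_increasing) simp_all
  ultimately show "N\<^sup>2 * (2 * \<beta> + \<beta>\<^sup>2) \<le> 2"
    by linarith
qed

lemma unit_regular_simplex_vertex_near: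
  fixes S S' :: "'a::euclidean_space set" and \<beta> :: real
  assumes S: "unit_regular_simplex S" and S': "unit_regular_simplex S'"
    and "0 \<le> \<beta>" and small: "3000 * (real DIM('a) + 1) ^ 3 * \<beta> \<le> 1"
    and close: "\<And>x w. x \<in> S \<Longrightarrow> w \<in> S' \<Longrightarrow> dist x w \<le> 1 + \<beta>"
    and "v \<in> S"
  shows "\<exists>w\<in>S'. dist v w \<le> (real DIM('a) + 1) * (real DIM('a))\<^sup>2 * \<beta>"
proof -
  define d where "d = DIM('a)"
  define N where "N = real d + 1"
  define \<epsilon> where "\<epsilon> = 2 * \<beta> + \<beta>\<^sup>2"
  define \<alpha> where "\<alpha> = N * (\<epsilon> - (norm (v - centroid S'))\<^sup>2) + real d / 2"
  have "1 \<le> d" "2 \<le> N" "0 \<le> \<epsilon>" "0 \<le> real d * \<epsilon>"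
    using \<open>0 \<le> \<beta>\<close> by (simp_all add: d_def N_def \<epsilon>_def DIM_positive Suc_leI)
  have "3000 * N ^ 3 * \<beta> \<le> 1"
    using small by (simp add: N_def d_def)
  note \<beta>_bounds = small_beta_bounds[OF _ \<open>0 \<le> \<beta>\<close> this, folded \<epsilon>_def]
  have close_sq: "(norm (x - w))\<^sup>2 \<le> 1 + \<epsilon>" if "x \<in> S" "w \<in> S'" for x w
    using power_mono[OF close[OF that, unfolded dist_norm], of 2] by (simp add: \<epsilon>_def power2_sum)
  have \<alpha>_bounds: "\<epsilon> / 2 \<le> \<alpha>" "\<alpha> \<le> N\<^sup>2 * \<epsilon> - real d * \<epsilon> / 2"
    using unit_regular_simplex_excess_bounds[OF S S' \<open>0 \<le> \<epsilon>\<close> _ close_sq \<open>v \<in> S\<close>]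
      \<beta>_bounds(3) \<open>2 \<le> N\<close>
    by (simp_all add: \<alpha>_def N_def d_def)
  then have "0 \<le> \<alpha>" "\<alpha> \<le> N\<^sup>2 * \<epsilon>"
    using \<open>0 \<le> \<epsilon>\<close> \<open>0 \<le> real d * \<epsilon>\<close> by linarith+
  then obtain w where "w \<in> S'"
    and "99 * (norm (v - w))\<^sup>2 \<le> 100 * ((\<epsilon> - \<alpha> / 2)\<^sup>2 + (N - 2) * \<alpha>\<^sup>2 / (4 * N))"
    using unit_regular_simplex_dominant_vertex[OF S', of \<epsilon> v \<alpha>, folded d_def, folded N_def]
      \<open>0 \<le> \<epsilon>\<close> \<beta>_bounds(2) \<open>2 \<le> N\<close> close_sq[OF \<open>v \<in> S\<close>] \<alpha>_def
    by auto
  moreover have "100 * ((\<epsilon> - \<alpha> / 2)\<^sup>2 + (N - 2) * \<alpha>\<^sup>2 / (4 * N)) \<le> 99 * (N * (real d)\<^sup>2 * \<beta>)\<^sup>2"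
    using deficit_estimate_le[OF \<open>1 \<le> d\<close> \<open>0 \<le> \<beta>\<close> _ \<epsilon>_def] \<alpha>_bounds \<beta>_bounds(1) \<open>2 \<le> N\<close>
    by (simp add: N_def)
  ultimately have "(norm (v - w))\<^sup>2 \<le> (N * (real d)\<^sup>2 * \<beta>)\<^sup>2"
    by linarith
  then have "norm (v - w) \<le> N * (real d)\<^sup>2 * \<beta>"
    by (rule power2_le_imp_le) (use \<open>0 \<le> \<beta>\<close> \<open>2 \<le> N\<close> in simp)
  then show ?thesis
    using \<open>w \<in> S'\<close> by (auto simp: dist_norm N_def d_def)
qed

lemma hausdorff_dist_le:
  fixes A B :: "'a::metric_space set"
  assumes "finite A" "finite B" "A \<noteq> {}" "B \<noteq> {}"
    and A_near: "\<And>a. a \<in> A \<Longrightarrow> \<exists>b\<in>B. dist a b \<le> C"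
    and B_near: "\<And>b. b \<in> B \<Longrightarrow> \<exists>a\<in>A. dist b a \<le> C"
  shows "hausdorff_dist A B \<le> C"
proof -
  have "(INF b\<in>B. dist a b) \<le> C" if a: "a \<in> A" for a
  proof -
    obtain b where "b \<in> B" "dist a b \<le> C"
      using A_near[OF a] by blast
    moreover have "(INF b\<in>B. dist a b) \<le> dist a b"
      using \<open>b \<in> B\<close> \<open>finite B\<close> by (intro cINF_lower) (simp_all add: bdd_below_finite)
    ultimately show ?thesis by simp
  qed
  moreover have "(INF a\<in>A. dist a b) \<le> C" if b: "b \<in> B" for b
  proof -
    obtain a where "a \<in> A" "dist b a \<le> C"
      using B_near[OF b] by blast
    moreover have "(INF a\<in>A. dist a b) \<le> dist a b"
      using \<open>a \<in> A\<close> \<open>finite A\<close> by (intro cINF_lower) (simp_all add: bdd_below_finite)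
    ultimately show ?thesis by (simp add: dist_commute)
  qed
  ultimately show ?thesis
    unfolding hausdorff_dist_def using \<open>A \<noteq> {}\<close> \<open>B \<noteq> {}\<close> by (simp add: cSUP_least)
qed

theorem unit_regular_simplices_hausdorff_dist_le:
  fixes \<Delta> \<Delta>' :: "'a::euclidean_space set"
  assumes \<Delta>: "unit_regular_simplex \<Delta>" and \<Delta>': "unit_regular_simplex \<Delta>'"
    and "0 \<le> \<beta>" and small: "3000 * (real DIM('a) + 1) ^ 3 * \<beta> \<le> 1"
    and diam: "diameter (\<Delta> \<union> \<Delta>') \<le> 1 + \<beta>"
  shows "hausdorff_dist \<Delta> \<Delta>' \<le> (real DIM('a) + 1) * (real DIM('a))\<^sup>2 * \<beta>"
proof -
  note \<Delta>_props = unit_regular_simplexD[OF \<Delta>] and \<Delta>'_props = unit_regular_simplexD[OF \<Delta>']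
  have "bounded (\<Delta> \<union> \<Delta>')"
    using \<Delta>_props(1) \<Delta>'_props(1) by (simp add: finite_imp_bounded)
  then have "dist x y \<le> 1 + \<beta>" if "x \<in> \<Delta> \<union> \<Delta>'" "y \<in> \<Delta> \<union> \<Delta>'" for x y
    using diameter_bounded_bound[OF _ that] diam by fastforce
  then have "dist x y \<le> 1 + \<beta>" "dist y x \<le> 1 + \<beta>" if "x \<in> \<Delta>" "y \<in> \<Delta>'" for x y
    using that by simp_all
  then show ?thesis
    using unit_regular_simplex_vertex_near[OF \<Delta> \<Delta>' \<open>0 \<le> \<beta>\<close> small]
      unit_regular_simplex_vertex_near[OF \<Delta>' \<Delta> \<open>0 \<le> \<beta>\<close> small]
    by (intro hausdorff_dist_le[OF \<Delta>_props(1) \<Delta>'_props(1) \<Delta>_props(3) \<Delta>'_props(3)]) blast+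
qed

theorem mainTheorem5:
  "\<exists>\<beta>d::real. \<beta>d > 0 \<and>
     (\<forall>(\<Delta>::(real^'n) set) \<Delta>' \<beta>.
        unit_regular_simplex \<Delta> \<longrightarrow> unit_regular_simplex \<Delta>' \<longrightarrow>
        0 \<le> \<beta> \<longrightarrow> \<beta> < \<beta>d \<longrightarrow>
        diameter (\<Delta> \<union> \<Delta>') \<le> 1 + \<beta> \<longrightarrow>
        hausdorff_dist \<Delta> \<Delta>' \<le> real (CARD('n) + 1) * real (CARD('n))^2 * \<beta>)"
proof -
  define N where "N = real CARD('n) + 1"
  have "0 < 1 / (3000 * N ^ 3)"
    by (simp add: N_def add_pos_nonneg)
  moreover have "hausdorff_dist \<Delta> \<Delta>' \<le> real (CARD('n) + 1) * real (CARD('n))^2 * \<beta>"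
    if "unit_regular_simplex \<Delta>" "unit_regular_simplex \<Delta>'" "0 \<le> \<beta>" "\<beta> < 1 / (3000 * N ^ 3)"
      and "diameter (\<Delta> \<union> \<Delta>') \<le> 1 + \<beta>"
    for \<Delta> \<Delta>' :: "(real^'n) set" and \<beta> :: real
  proof -
    have "3000 * (real DIM(real^'n) + 1) ^ 3 * \<beta> \<le> 1"
      using that(4) by (simp add: N_def field_simps)
    from unit_regular_simplices_hausdorff_dist_le[OF that(1-3) this that(5)]
    show ?thesis
      by (simp add: add.commute)
  qed
  ultimately show ?thesis
    by blast
qed

end
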